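(* Let $J$ be a bounded half-line Jacobi matrix with $0<\inf_na_n\le\sup_na_n<\infty$, let $\mathcal R$ be the set of its right limits, and let $K\subset\mathbb{R}$ be compact. Suppose that for each $x_0\in K$ and $J^{(r)}\in\mathcal R$ there is a (complex) solution $u^+=u^+(J^{(r)},x_0)$, $n\in\mathbb{Z}$, of $a^{(r)}_nu_{n+1}+b^{(r)}_nu_n+a^{(r)}_{n-1}u_{n-1}=x_0u_n$ such that (i) $\sup_{n\in\mathbb{Z},\,x_0\in K,\,J^{(r)}\in\mathcal R}|u^+_n(J^{(r)},x_0)|<\infty$, and (ii) $\inf_{x_0\in K,\,J^{(r)}\in\mathcal R}\ a_0^{(r)}\big|u_1^+\overline{u_0^+}-\overline{u_1^+}u_0^+\big|>0$. Then the Nevai condition holds for $J$ uniformly on $K$, i.e. $\sup_{x_0\in K}\ p_n(x_0)^2/K_n(x_0,x_0)\to0$ as $n\to\infty$ (and hence the Nevai condition holds at every $x_0\in K$).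
   Context: A half-line Jacobi matrix $J$ with parameters $\{a_n,b_n\}_{n\ge1}$ ($a_n>0$) acts on $\ell^2(\{1,2,\dots\})$ by $J_{nn}=b_n$, $J_{n,n+1}=J_{n+1,n}=a_n$; $\rho$ is its spectral measure for $\delta_1$, $p_n$ ($n\ge0$) its orthonormal polynomials ($p_{-1}=0$, $p_0=1$, $xp_n=a_{n+1}p_{n+1}+b_{n+1}p_n+a_np_{n-1}$), and $K_n(x,y)=\sum_{j=0}^np_j(x)p_j(y)$. A two-sided sequence $\{a^{(r)}_n,b^{(r)}_n\}_{n\in\mathbb{Z}}$ is a right limit of $J$ if there are $m_j\to\infty$ with $a_{m_j+n}\to a^{(r)}_n$ and $b_{m_j+n}\to b^{(r)}_n$ for every $n\in\mathbb{Z}$; the corresponding two-sided Jacobi matrix is denoted $J^{(r)}$. The Nevai condition at $x_0$ means $K_n(x,x_0)^2\,d\rho(x)/K_n(x_0,x_0)\to\delta_{x_0}$ weakly. *)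

theory Defs
  imports "HOL-Analysis.Analysis"
begin

text \<open>Half-line Jacobi parameters are functions a b :: nat \<Rightarrow> real, of which only
  the values at n \<ge> 1 are used (a n = a_n, b n = b_n).\<close>

fun orth_poly :: "(nat \<Rightarrow> real) \<Rightarrow> (nat \<Rightarrow> real) \<Rightarrow> nat \<Rightarrow> real \<Rightarrow> real" where
  "orth_poly a b 0 x = 1"
| "orth_poly a b (Suc 0) x = (x - b 1) / a 1"
| "orth_poly a b (Suc (Suc n)) x =
     ((x - b (n + 2)) * orth_poly a b (Suc n) x - a (n + 1) * orth_poly a b n x) / a (n + 2)"

definition CD_kernel :: "(nat \<Rightarrow> real) \<Rightarrow> (nat \<Rightarrow> real) \<Rightarrow> nat \<Rightarrow> real \<Rightarrow> real \<Rightarrow> real" where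
  "CD_kernel a b n x y = (\<Sum>j\<le>n. orth_poly a b j x * orth_poly a b j y)"

text \<open>Two-sided sequences (ar, br) form a right limit of (a, b) if along some
  sequence m_j \<rightarrow> \<infinity>, a_{m_j+n} \<rightarrow> ar_n and b_{m_j+n} \<rightarrow> br_n for every integer n.
  (The indices m_j + n are eventually \<ge> 1, so the truncation by nat is irrelevant.)\<close>
definition is_right_limit ::
  "(nat \<Rightarrow> real) \<Rightarrow> (nat \<Rightarrow> real) \<Rightarrow> (int \<Rightarrow> real) \<Rightarrow> (int \<Rightarrow> real) \<Rightarrow> bool" where
  "is_right_limit a b ar br \<longleftrightarrow>
     (\<exists>m :: nat \<Rightarrow> nat. filterlim m at_top sequentially \<and>
        (\<forall>n::int. (\<lambda>j. a (nat (int (m j) + n))) \<longlonglongrightarrow> ar n \<and>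
                  (\<lambda>j. b (nat (int (m j) + n))) \<longlonglongrightarrow> br n))"

text \<open>Action of the half-line Jacobi matrix on sequences indexed by {1,2,...}
  (the value at index 0 is ignored, i.e. treated as 0).\<close>
definition jacobi_apply :: "(nat \<Rightarrow> real) \<Rightarrow> (nat \<Rightarrow> real) \<Rightarrow> (nat \<Rightarrow> real) \<Rightarrow> nat \<Rightarrow> real" where
  "jacobi_apply a b v n =
     (if n = 0 then 0
      else (if n = 1 then 0 else a (n - 1) * v (n - 1)) + b n * v n + a n * v (n + 1))"

text \<open>Spectral measure of J for \<delta>_1: a Borel measure on the reals with
  \<integral> x^k d\<rho> = \<langle>\<delta>_1, J^k \<delta>_1\<rangle> for all k (for bounded J this determines \<rho>).\<close>
definition jacobi_spectral_measure ::
  "(nat \<Rightarrow> real) \<Rightarrow> (nat \<Rightarrow> real) \<Rightarrow> real measure \<Rightarrow> bool" where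
  "jacobi_spectral_measure a b \<rho> \<longleftrightarrow>
     sets \<rho> = sets borel \<and> finite_measure \<rho> \<and>
     (\<forall>k::nat. integrable \<rho> (\<lambda>x. x ^ k) \<and>
        integral\<^sup>L \<rho> (\<lambda>x. x ^ k) =
          ((jacobi_apply a b ^^ k) (\<lambda>n. if n = 1 then 1 else 0)) 1)"

end

theory Submission
  imports Defs
begin

text \<open>If p_n(x)^2 / K_n(x,x) does not tend to 0 uniformly on K, it stays above some e > 0
  along n_k \<rightarrow> \<infinity>, x_k \<in> K. The windows w_j = p_{n_k+j-1}(x_k) / sqrt K_{n_k}(x_k,x_k), j \<le> 1,
  have unit l^2-norm, so by compactness a subsequence converges pointwise, together with the
  shifted Jacobi parameters and x_k, to a real sequence w, a right limit J^(r) and x_0 \<in> K.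
  The limit w solves J^(r) w = x_0 w on the left half-line, is square summable at -\<infinity> and has
  w_1^2 \<ge> e. Its Wronskian with the bounded solution u^+ is constant and tends to 0 at -\<infinity>, so
  it vanishes; as the Wronskian of u^+ with its complex conjugate is nonzero, u^+ is not
  proportional to a real sequence, which forces w_1 = 0.

  The Nevai condition then follows from the Christoffel--Darboux formula: the probability
  densities K_n(x,x_0)^2 / K_n(x_0,x_0) d\<rho>(x) have second moment about x_0 equal to
  a_{n+1}^2 (p_n(x_0)^2 + p_{n+1}(x_0)^2) / K_n(x_0,x_0), which tends to 0.\<close>

lemma continuous_bounded_quadratic_majorant:
  fixes f :: "real \<Rightarrow> real"
  assumes "isCont f x0" "\<And>x. \<bar>f x\<bar> \<le> B" "0 < \<epsilon>"
  obtains c where "\<And>x. \<bar>f x - f x0\<bar> \<le> \<epsilon> + c * (x - x0)\<^sup>2"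
proof -
  obtain \<eta> where \<eta>: "0 < \<eta>" "\<And>x. \<bar>x - x0\<bar> < \<eta> \<Longrightarrow> \<bar>f x - f x0\<bar> < \<epsilon>"
    using assms(1,3) unfolding continuous_at_eps_delta dist_real_def by blast
  have "\<bar>f x - f x0\<bar> \<le> \<epsilon> + 2 * B / \<eta>\<^sup>2 * (x - x0)\<^sup>2" for x
  proof (cases "\<bar>x - x0\<bar> < \<eta>")
    case True
    moreover have "0 \<le> 2 * B / \<eta>\<^sup>2 * (x - x0)\<^sup>2" using assms(2)[of x] by simp
    ultimately show ?thesis using \<eta>(2) by fastforce
  next
    case False
    then have "\<eta>\<^sup>2 \<le> (x - x0)\<^sup>2" using \<eta>(1) by (metis abs_le_square_iff abs_of_pos not_less)
    then have "2 * B \<le> 2 * B / \<eta>\<^sup>2 * (x - x0)\<^sup>2"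
      using \<eta>(1) assms(2)[of x] by (simp add: field_simps mult_left_mono)
    moreover have "\<bar>f x - f x0\<bar> \<le> 2 * B" using assms(2)[of x] assms(2)[of x0] by linarith
    ultimately show ?thesis using assms(3) by linarith
  qed
  then show thesis by (rule that)
qed

lemma tendsto_integral_of_second_moment_tendsto_0:
  fixes M :: "real measure" and g :: "nat \<Rightarrow> real \<Rightarrow> real" and f :: "real \<Rightarrow> real"
  assumes g_integrable: "\<And>n. integrable M (g n)"
    and g_integral: "\<And>n. integral\<^sup>L M (g n) = 1"
    and g_nonneg: "\<And>n x. 0 \<le> g n x"
    and moment_integrable: "\<And>n. integrable M (\<lambda>x. (x - x0)\<^sup>2 * g n x)"
    and moment_tendsto: "(\<lambda>n. integral\<^sup>L M (\<lambda>x. (x - x0)\<^sup>2 * g n x)) \<longlonglongrightarrow> 0"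
    and f_cont: "isCont f x0" and f_bounded: "\<And>x. \<bar>f x\<bar> \<le> B"
    and f_measurable: "f \<in> borel_measurable M"
  shows "(\<lambda>n. integral\<^sup>L M (\<lambda>x. f x * g n x)) \<longlonglongrightarrow> f x0"
proof (rule tendstoI)
  fix \<epsilon> :: real
  assume "0 < \<epsilon>"
  then obtain c where c: "\<And>x. \<bar>f x - f x0\<bar> \<le> \<epsilon> / 2 + c * (x - x0)\<^sup>2"
    using continuous_bounded_quadratic_majorant[OF f_cont f_bounded, of "\<epsilon> / 2"] by auto
  have fg_integrable: "integrable M (\<lambda>x. f x * g n x)" for n
  proof (rule Bochner_Integration.integrable_bound)
    show "integrable M (\<lambda>x. B * g n x)" using g_integrable by simp
    show "(\<lambda>x. f x * g n x) \<in> borel_measurable M"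
      using f_measurable borel_measurable_integrable[OF g_integrable] by measurable
    show "AE x in M. norm (f x * g n x) \<le> norm (B * g n x)"
      using mult_right_mono[OF f_bounded g_nonneg] g_nonneg f_bounded[of x0] by (simp add: abs_mult)
  qed
  have bound: "dist (integral\<^sup>L M (\<lambda>x. f x * g n x)) (f x0)
      \<le> \<epsilon> / 2 + c * integral\<^sup>L M (\<lambda>x. (x - x0)\<^sup>2 * g n x)" for n
  proof -
    have "integral\<^sup>L M (\<lambda>x. f x * g n x) - f x0 = integral\<^sup>L M (\<lambda>x. (f x - f x0) * g n x)"
      using fg_integrable g_integrable g_integral by (simp add: left_diff_distrib)
    also have "\<bar>\<dots>\<bar> \<le> integral\<^sup>L M (\<lambda>x. \<epsilon> / 2 * g n x + c * ((x - x0)\<^sup>2 * g n x))"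
    proof (rule integral_abs_bound_integral)
      fix x
      have "\<bar>(f x - f x0) * g n x\<bar> = \<bar>f x - f x0\<bar> * g n x"
        by (simp add: abs_mult g_nonneg)
      also have "\<dots> \<le> (\<epsilon> / 2 + c * (x - x0)\<^sup>2) * g n x"
        by (rule mult_right_mono[OF c g_nonneg])
      finally show "\<bar>(f x - f x0) * g n x\<bar> \<le> \<epsilon> / 2 * g n x + c * ((x - x0)\<^sup>2 * g n x)"
        by (simp add: algebra_simps)
    qed (use fg_integrable g_integrable moment_integrable in \<open>auto simp: left_diff_distrib\<close>)
    also have "\<dots> = \<epsilon> / 2 + c * integral\<^sup>L M (\<lambda>x. (x - x0)\<^sup>2 * g n x)"
      using g_integrable moment_integrable g_integral by simp
    finally show ?thesis by (simp add: dist_real_def)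
  qed
  have "(\<lambda>n. c * integral\<^sup>L M (\<lambda>x. (x - x0)\<^sup>2 * g n x)) \<longlonglongrightarrow> 0"
    using tendsto_mult_right_zero[OF moment_tendsto] .
  then have "\<forall>\<^sub>F n in sequentially. c * integral\<^sup>L M (\<lambda>x. (x - x0)\<^sup>2 * g n x) < \<epsilon> / 2"
    using order_tendstoD(2)[of _ 0 _ "\<epsilon> / 2"] \<open>0 < \<epsilon>\<close> by simp
  then show "\<forall>\<^sub>F n in sequentially. dist (integral\<^sup>L M (\<lambda>x. f x * g n x)) (f x0) < \<epsilon>"
  proof eventually_elim
    case (elim n)
    then show ?case using bound[of n] by linarith
  qed
qed

lemma tendsto_0_of_sum_sq_bounded:
  fixes f :: "nat \<Rightarrow> real"
  assumes "\<And>N. (\<Sum>i<N. (f i)\<^sup>2) \<le> B"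
  shows "f \<longlonglongrightarrow> 0"
proof -
  have "summable (\<lambda>i. (f i)\<^sup>2)"
    by (rule summableI_nonneg_bounded[OF _ assms]) simp
  then have "(\<lambda>i. (f i)\<^sup>2) \<longlonglongrightarrow> 0"
    by (rule summable_LIMSEQ_zero)
  then have "(\<lambda>i. \<bar>f i\<bar>) \<longlonglongrightarrow> 0"
    using tendsto_real_sqrt by fastforce
  then show ?thesis
    by (simp add: tendsto_rabs_zero_iff)
qed

lemma compact_PiE_UNIV:
  fixes S :: "'a::topological_space set"
  assumes "compact S"
  shows "compact (UNIV \<rightarrow>\<^sub>E S)"
  using assms by (metis compactin_PiE compactin_euclidean_iff euclidean_product_topology)

lemma bounded_range_of_bounded_from_1:
  fixes f :: "nat \<Rightarrow> real"
  assumes "\<forall>n\<ge>1. \<bar>f n\<bar> \<le> C"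
  shows "bounded (range f)"
proof -
  have "\<bar>f n\<bar> \<le> max C \<bar>f 0\<bar>" for n
    using assms by (cases "n = 0") (auto intro: max.coboundedI1)
  then show ?thesis
    by (auto simp: bounded_iff intro!: exI[of _ "max C \<bar>f 0\<bar>"])
qed

section \<open>Orthonormal polynomials and the Christoffel--Darboux kernel\<close>

lemma orth_poly_recurrence:
  assumes "a (n + 2) \<noteq> 0"
  shows "a (n + 2) * orth_poly a b (n + 2) x + b (n + 2) * orth_poly a b (n + 1) x
           + a (n + 1) * orth_poly a b n x = x * orth_poly a b (n + 1) x"
  using assms by (simp add: field_simps)

lemma CD_kernel_Suc:
  "CD_kernel a b (Suc n) x y = CD_kernel a b n x y + orth_poly a b (Suc n) x * orth_poly a b (Suc n) y"
  by (simp add: CD_kernel_def)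

lemma orth_poly_sq_le_CD_kernel:
  assumes "i \<le> n"
  shows "(orth_poly a b i x)\<^sup>2 \<le> CD_kernel a b n x x"
proof -
  have "(orth_poly a b i x)\<^sup>2 = (\<Sum>j\<in>{i}. orth_poly a b j x * orth_poly a b j x)"
    by (simp add: power2_eq_square)
  also have "\<dots> \<le> CD_kernel a b n x x"
    unfolding CD_kernel_def by (rule sum_mono2) (use assms in auto)
  finally show ?thesis .
qed

lemma CD_kernel_diag_ge_1: "1 \<le> CD_kernel a b n x x"
  using orth_poly_sq_le_CD_kernel[of 0 n a b x] by simp

lemma christoffel_darboux:
  assumes "\<forall>n\<ge>1. a n \<noteq> 0"
  shows "(x - y) * CD_kernel a b n x y
           = a (Suc n) * (orth_poly a b (Suc n) x * orth_poly a b n y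
                          - orth_poly a b n x * orth_poly a b (Suc n) y)"
proof (induction n)
  case 0
  show ?case using assms by (simp add: CD_kernel_def field_simps)
next
  case (Suc n)
  have "a (Suc (Suc n)) \<noteq> 0" using assms by simp
  have "(x - y) * CD_kernel a b (Suc n) x y
      = (x - y) * CD_kernel a b n x y + (x - y) * (orth_poly a b (Suc n) x * orth_poly a b (Suc n) y)"
    by (simp add: CD_kernel_Suc algebra_simps)
  also have "\<dots> = a (Suc (Suc n)) * (orth_poly a b (Suc (Suc n)) x * orth_poly a b (Suc n) y
                                    - orth_poly a b (Suc n) x * orth_poly a b (Suc (Suc n)) y)"
    unfolding Suc using \<open>a (Suc (Suc n)) \<noteq> 0\<close> by (simp add: field_simps)
  finally show ?case .
qed

section \<open>Orthonormality with respect to the spectral measure\<close>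

definition basis_vec :: "nat \<Rightarrow> nat \<Rightarrow> real" where
  "basis_vec j = (\<lambda>m. if m = j + 1 then 1 else 0)"

lemma jacobi_pow_add:
  "(jacobi_apply a b ^^ k) (\<lambda>n. v n + w n)
     = (\<lambda>n. (jacobi_apply a b ^^ k) v n + (jacobi_apply a b ^^ k) w n)"
  by (induction k) (auto simp: jacobi_apply_def algebra_simps)

lemma jacobi_pow_scale:
  "(jacobi_apply a b ^^ k) (\<lambda>n. c * v n) = (\<lambda>n. c * (jacobi_apply a b ^^ k) v n)"
  by (induction k) (auto simp: jacobi_apply_def algebra_simps)

lemma jacobi_apply_basis_vec_0:
  "jacobi_apply a b (basis_vec 0) = (\<lambda>n. b 1 * basis_vec 0 n + a 1 * basis_vec 1 n)"
  by (auto simp: jacobi_apply_def basis_vec_def fun_eq_iff)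

lemma jacobi_apply_basis_vec_Suc:
  "jacobi_apply a b (basis_vec (Suc i))
     = (\<lambda>n. a (i + 1) * basis_vec i n + b (i + 2) * basis_vec (i + 1) n + a (i + 2) * basis_vec (i + 2) n)"
  by (auto simp: jacobi_apply_def basis_vec_def fun_eq_iff)

lemma jacobi_apply_at_1: "jacobi_apply a b v 1 = b 1 * v 1 + a 1 * v 2"
  by (simp add: jacobi_apply_def numeral_2_eq_2)

lemma jacobi_apply_at_Suc_Suc:
  "jacobi_apply a b v (i + 2) = a (i + 1) * v (i + 1) + b (i + 2) * v (i + 2) + a (i + 2) * v (i + 3)"
  by (simp add: jacobi_apply_def numeral_2_eq_2 numeral_3_eq_3)

lemma jacobi_pow_Suc_basis_vec_0:
  "(jacobi_apply a b ^^ Suc k) (basis_vec 0)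
     = (\<lambda>n. b 1 * (jacobi_apply a b ^^ k) (basis_vec 0) n + a 1 * (jacobi_apply a b ^^ k) (basis_vec 1) n)"
  unfolding funpow_Suc_right o_apply jacobi_apply_basis_vec_0 jacobi_pow_add jacobi_pow_scale ..

lemma jacobi_pow_Suc_basis_vec_Suc:
  "(jacobi_apply a b ^^ Suc k) (basis_vec (Suc i))
     = (\<lambda>n. a (i + 1) * (jacobi_apply a b ^^ k) (basis_vec i) n
          + b (i + 2) * (jacobi_apply a b ^^ k) (basis_vec (i + 1)) n
          + a (i + 2) * (jacobi_apply a b ^^ k) (basis_vec (i + 2)) n)"
  unfolding funpow_Suc_right o_apply jacobi_apply_basis_vec_Suc jacobi_pow_add jacobi_pow_scale ..

locale jacobi_spectral =
  fixes a b :: "nat \<Rightarrow> real" and \<rho> :: "real measure"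
  assumes a_nonzero: "\<forall>n\<ge>1. a n \<noteq> 0"
    and spectral: "jacobi_spectral_measure a b \<rho>"
begin

abbreviation "p \<equiv> orth_poly a b"
abbreviation "J \<equiv> jacobi_apply a b"

lemma a_Suc_nonzero: "a (Suc n) \<noteq> 0"
  using a_nonzero by simp

text \<open>Since p_j(J) \<delta>_1 = \<delta>_{j+1}, the moments of p_j are the first entries of
  J^k \<delta>_{j+1}; this is proved by induction on j from the recurrence, without functional calculus.\<close>

lemma moment_orth_poly:
  "integrable \<rho> (\<lambda>x. x ^ k * p j x) \<and> integral\<^sup>L \<rho> (\<lambda>x. x ^ k * p j x) = (J ^^ k) (basis_vec j) 1"
proof -
  have moment_0: "integrable \<rho> (\<lambda>x. x ^ k * p 0 x) \<and> integral\<^sup>L \<rho> (\<lambda>x. x ^ k * p 0 x) = (J ^^ k) (basis_vec 0) 1"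
    for k using spectral by (simp add: jacobi_spectral_measure_def basis_vec_def)
  show ?thesis
  proof (induction j arbitrary: k rule: induct_nat_012)
    case 0
    show ?case by (rule moment_0)
  next
    case 1
    have "(\<lambda>x. x ^ k * p 1 x) = (\<lambda>x. (x ^ Suc k * p 0 x - b 1 * (x ^ k * p 0 x)) / a 1)"
      using a_Suc_nonzero[of 0] by (auto simp: field_simps)
    moreover have "(J ^^ k) (basis_vec 1) 1 = ((J ^^ Suc k) (basis_vec 0) 1 - b 1 * (J ^^ k) (basis_vec 0) 1) / a 1"
      unfolding jacobi_pow_Suc_basis_vec_0 using a_Suc_nonzero[of 0] by (simp add: field_simps)
    ultimately show ?case using moment_0[of k] moment_0[of "Suc k"] by simp
  next
    case (ge2 i)
    have "(\<lambda>x. x ^ k * p (Suc (Suc i)) x)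
        = (\<lambda>x. (x ^ Suc k * p (Suc i) x - b (i + 2) * (x ^ k * p (Suc i) x) - a (i + 1) * (x ^ k * p i x)) / a (i + 2))"
      using a_Suc_nonzero[of "Suc i"] by (auto simp: field_simps)
    moreover have "(J ^^ k) (basis_vec (Suc (Suc i))) 1
        = ((J ^^ Suc k) (basis_vec (Suc i)) 1 - b (i + 2) * (J ^^ k) (basis_vec (Suc i)) 1
           - a (i + 1) * (J ^^ k) (basis_vec i) 1) / a (i + 2)"
      unfolding jacobi_pow_Suc_basis_vec_Suc using a_Suc_nonzero[of "Suc i"] by (simp add: field_simps)
    ultimately show ?case using ge2.IH(1)[of k] ge2.IH(2)[of k] ge2.IH(2)[of "Suc k"] by simp
  qed
qed

lemma moment_orth_poly_product:
  "integrable \<rho> (\<lambda>x. p i x * (x ^ k * p j x))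
   \<and> integral\<^sup>L \<rho> (\<lambda>x. p i x * (x ^ k * p j x)) = (J ^^ k) (basis_vec j) (i + 1)"
proof (induction i arbitrary: k rule: induct_nat_012)
  case 0
  show ?case using moment_orth_poly by simp
next
  case 1
  have "(\<lambda>x. p 1 x * (x ^ k * p j x)) = (\<lambda>x. (x ^ Suc k * p j x - b 1 * (x ^ k * p j x)) / a 1)"
    using a_Suc_nonzero[of 0] by (auto simp: field_simps)
  moreover have "(J ^^ k) (basis_vec j) 2 = ((J ^^ Suc k) (basis_vec j) 1 - b 1 * (J ^^ k) (basis_vec j) 1) / a 1"
    unfolding funpow.simps(2) o_apply jacobi_apply_at_1 using a_Suc_nonzero[of 0] by (simp add: field_simps)
  ultimately show ?case using moment_orth_poly[of k j] moment_orth_poly[of "Suc k" j]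
    by (simp add: numeral_2_eq_2)
next
  case (ge2 i)
  have "(\<lambda>x. p (Suc (Suc i)) x * (x ^ k * p j x))
      = (\<lambda>x. (p (Suc i) x * (x ^ Suc k * p j x) - b (i + 2) * (p (Suc i) x * (x ^ k * p j x))
             - a (i + 1) * (p i x * (x ^ k * p j x))) / a (i + 2))"
    using a_Suc_nonzero[of "Suc i"] by (auto simp: field_simps)
  moreover have "(J ^^ k) (basis_vec j) (i + 3)
      = ((J ^^ Suc k) (basis_vec j) (i + 2) - b (i + 2) * (J ^^ k) (basis_vec j) (i + 2)
         - a (i + 1) * (J ^^ k) (basis_vec j) (i + 1)) / a (i + 2)"
    unfolding funpow.simps(2) o_apply jacobi_apply_at_Suc_Suc using a_Suc_nonzero[of "Suc i"]
    by (simp add: field_simps)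
  ultimately show ?case using ge2.IH(1)[of k] ge2.IH(2)[of k] ge2.IH(2)[of "Suc k"]
    by (simp add: numeral_3_eq_3)
qed

lemma orth_poly_orthonormal:
  "integrable \<rho> (\<lambda>x. p i x * p j x)"
  "integral\<^sup>L \<rho> (\<lambda>x. p i x * p j x) = (if i = j then 1 else 0)"
  using moment_orth_poly_product[of i 0 j] by (auto simp: basis_vec_def)

lemma integral_CD_kernel_sq:
  "integrable \<rho> (\<lambda>x. (CD_kernel a b n x y)\<^sup>2)"
  "integral\<^sup>L \<rho> (\<lambda>x. (CD_kernel a b n x y)\<^sup>2) = CD_kernel a b n y y"
proof -
  have sq: "(\<lambda>x. (CD_kernel a b n x y)\<^sup>2) = (\<lambda>x. \<Sum>i\<le>n. \<Sum>j\<le>n. (p i y * p j y) * (p i x * p j x))"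
    by (auto simp: CD_kernel_def power2_eq_square sum_product algebra_simps)
  show "integrable \<rho> (\<lambda>x. (CD_kernel a b n x y)\<^sup>2)"
    unfolding sq using orth_poly_orthonormal by auto
  have "integral\<^sup>L \<rho> (\<lambda>x. (CD_kernel a b n x y)\<^sup>2) = (\<Sum>i\<le>n. \<Sum>j\<le>n. (p i y * p j y) * (if i = j then 1 else 0))"
    unfolding sq using orth_poly_orthonormal by (simp add: integral_sum)
  also have "\<dots> = CD_kernel a b n y y"
    by (simp add: CD_kernel_def if_distrib sum.delta cong: if_cong)
  finally show "integral\<^sup>L \<rho> (\<lambda>x. (CD_kernel a b n x y)\<^sup>2) = CD_kernel a b n y y" .
qed

lemma integral_second_moment_CD_kernel:
  "integrable \<rho> (\<lambda>x. (x - y)\<^sup>2 * (CD_kernel a b n x y)\<^sup>2)"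
  "integral\<^sup>L \<rho> (\<lambda>x. (x - y)\<^sup>2 * (CD_kernel a b n x y)\<^sup>2) = (a (Suc n))\<^sup>2 * ((p n y)\<^sup>2 + (p (Suc n) y)\<^sup>2)"
proof -
  have sq: "(\<lambda>x. (x - y)\<^sup>2 * (CD_kernel a b n x y)\<^sup>2)
      = (\<lambda>x. (a (Suc n))\<^sup>2 * ((p n y)\<^sup>2 * (p (Suc n) x * p (Suc n) x)
             - 2 * p n y * p (Suc n) y * (p (Suc n) x * p n x) + (p (Suc n) y)\<^sup>2 * (p n x * p n x)))"
  proof
    fix x
    have "(x - y)\<^sup>2 * (CD_kernel a b n x y)\<^sup>2 = ((x - y) * CD_kernel a b n x y)\<^sup>2"
      by (simp add: power_mult_distrib)
    then show "(x - y)\<^sup>2 * (CD_kernel a b n x y)\<^sup>2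
      = (a (Suc n))\<^sup>2 * ((p n y)\<^sup>2 * (p (Suc n) x * p (Suc n) x)
             - 2 * p n y * p (Suc n) y * (p (Suc n) x * p n x) + (p (Suc n) y)\<^sup>2 * (p n x * p n x))"
      unfolding christoffel_darboux[OF a_nonzero] by (simp add: power2_eq_square algebra_simps)
  qed
  show "integrable \<rho> (\<lambda>x. (x - y)\<^sup>2 * (CD_kernel a b n x y)\<^sup>2)"
    unfolding sq using orth_poly_orthonormal by auto
  show "integral\<^sup>L \<rho> (\<lambda>x. (x - y)\<^sup>2 * (CD_kernel a b n x y)\<^sup>2) = (a (Suc n))\<^sup>2 * ((p n y)\<^sup>2 + (p (Suc n) y)\<^sup>2)"
    unfolding sq using orth_poly_orthonormal by simp
qed

lemma second_moment_tendsto_0_of_ratio_tendsto_0: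
  assumes a_bounded: "bounded (range a)"
    and ratio: "(\<lambda>n. (p n y)\<^sup>2 / CD_kernel a b n y y) \<longlonglongrightarrow> 0"
  shows "(\<lambda>n. integral\<^sup>L \<rho> (\<lambda>x. (x - y)\<^sup>2 * ((CD_kernel a b n x y)\<^sup>2 / CD_kernel a b n y y))) \<longlonglongrightarrow> 0"
proof -
  obtain C where C: "\<And>n. \<bar>a n\<bar> \<le> C" using a_bounded by (auto simp: bounded_iff)
  define \<kappa> where "\<kappa> n = CD_kernel a b n y y" for n
  define r where "r n = (p n y)\<^sup>2 / \<kappa> n" for n
  have \<kappa>_ge_1: "1 \<le> \<kappa> n" for n unfolding \<kappa>_def by (rule CD_kernel_diag_ge_1)
  have r_nonneg: "0 \<le> r n" for n using \<kappa>_ge_1[of n] by (simp add: r_def)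
  have next_ratio: "(p (Suc n) y)\<^sup>2 / \<kappa> n = r (Suc n) / (1 - r (Suc n))" for n
  proof -
    have \<kappa>_Suc: "\<kappa> (Suc n) = \<kappa> n + (p (Suc n) y)\<^sup>2"
      by (simp add: \<kappa>_def CD_kernel_Suc power2_eq_square)
    then have "1 - r (Suc n) = \<kappa> n / \<kappa> (Suc n)"
      using \<kappa>_ge_1[of "Suc n"] by (simp add: r_def field_simps)
    then show ?thesis using \<kappa>_ge_1[of n] \<kappa>_ge_1[of "Suc n"] by (simp add: r_def)
  qed
  have r_Suc_less_1: "r (Suc n) < 1" for n
    using \<kappa>_ge_1[of n] \<kappa>_ge_1[of "Suc n"]
    by (simp add: r_def \<kappa>_def CD_kernel_Suc power2_eq_square divide_less_eq)
  have moment: "integral\<^sup>L \<rho> (\<lambda>x. (x - y)\<^sup>2 * ((CD_kernel a b n x y)\<^sup>2 / \<kappa> n))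
      = (a (Suc n))\<^sup>2 * (r n + r (Suc n) / (1 - r (Suc n)))" for n
  proof -
    have "integral\<^sup>L \<rho> (\<lambda>x. (x - y)\<^sup>2 * ((CD_kernel a b n x y)\<^sup>2 / \<kappa> n))
        = integral\<^sup>L \<rho> (\<lambda>x. (x - y)\<^sup>2 * (CD_kernel a b n x y)\<^sup>2) / \<kappa> n"
      by (simp add: times_divide_eq_right)
    also have "\<dots> = (a (Suc n))\<^sup>2 * (r n + (p (Suc n) y)\<^sup>2 / \<kappa> n)"
      unfolding integral_second_moment_CD_kernel(2) r_def using \<kappa>_ge_1[of n] by (simp add: field_simps)
    finally show ?thesis unfolding next_ratio .
  qed
  show ?thesis unfolding \<kappa>_def[symmetric] moment
  proof (rule tendsto_sandwich)
    show "\<forall>\<^sub>F n in sequentially. 0 \<le> (a (Suc n))\<^sup>2 * (r n + r (Suc n) / (1 - r (Suc n)))"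
      using r_nonneg r_Suc_less_1 by (intro always_eventually allI mult_nonneg_nonneg add_nonneg_nonneg
          divide_nonneg_pos) (auto simp: less_imp_le)
    have "(a (Suc n))\<^sup>2 \<le> C\<^sup>2" for n
      using abs_le_square_iff[of "a (Suc n)" C] C[of "Suc n"] C[of 0] by auto
    then show "\<forall>\<^sub>F n in sequentially. (a (Suc n))\<^sup>2 * (r n + r (Suc n) / (1 - r (Suc n)))
        \<le> C\<^sup>2 * (r n + r (Suc n) / (1 - r (Suc n)))"
      using r_nonneg r_Suc_less_1
      by (intro always_eventually allI mult_right_mono add_nonneg_nonneg divide_nonneg_pos) auto
    have "r \<longlonglongrightarrow> 0" using ratio by (simp add: r_def[abs_def] \<kappa>_def)
    then have "(\<lambda>n. C\<^sup>2 * (r n + r (Suc n) / (1 - r (Suc n)))) \<longlonglongrightarrow> C\<^sup>2 * (0 + 0 / (1 - 0))"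
      by (intro tendsto_intros LIMSEQ_Suc) auto
    then show "(\<lambda>n. C\<^sup>2 * (r n + r (Suc n) / (1 - r (Suc n)))) \<longlonglongrightarrow> 0" by simp
  qed simp
qed

lemma nevai_of_ratio_tendsto_0:
  fixes f :: "real \<Rightarrow> real"
  assumes "bounded (range a)"
    and ratio: "(\<lambda>n. (p n y)\<^sup>2 / CD_kernel a b n y y) \<longlonglongrightarrow> 0"
    and f_cont: "continuous_on UNIV f" and f_bounded: "bounded (range f)"
  shows "(\<lambda>n. integral\<^sup>L \<rho> (\<lambda>x. f x * (CD_kernel a b n x y)\<^sup>2 / CD_kernel a b n y y)) \<longlonglongrightarrow> f y"
proof -
  define g where "g n x = (CD_kernel a b n x y)\<^sup>2 / CD_kernel a b n y y" for n x
  have \<kappa>_pos: "0 < CD_kernel a b n y y" for n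
    using CD_kernel_diag_ge_1[of a b n y] by simp
  obtain B where B: "\<And>x. \<bar>f x\<bar> \<le> B" using f_bounded by (auto simp: bounded_iff)
  have "sets \<rho> = sets borel"
    using spectral by (simp add: jacobi_spectral_measure_def)
  then have f_measurable: "f \<in> borel_measurable \<rho>"
    using borel_measurable_continuous_onI[OF f_cont] measurable_cong_sets by blast
  have "(\<lambda>n. integral\<^sup>L \<rho> (\<lambda>x. f x * g n x)) \<longlonglongrightarrow> f y"
  proof (rule tendsto_integral_of_second_moment_tendsto_0[OF _ _ _ _ _ _ B f_measurable])
    show "integrable \<rho> (g n)" for n
      unfolding g_def using integral_CD_kernel_sq(1) by simp
    show "integral\<^sup>L \<rho> (g n) = 1" for n
      unfolding g_def using integral_CD_kernel_sq(2) \<kappa>_pos[of n] by simp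
    show "0 \<le> g n x" for n x
      unfolding g_def using \<kappa>_pos[of n] by simp
    show "integrable \<rho> (\<lambda>x. (x - y)\<^sup>2 * g n x)" for n
      unfolding g_def using integral_second_moment_CD_kernel(1) by (simp add: times_divide_eq_right)
    show "(\<lambda>n. integral\<^sup>L \<rho> (\<lambda>x. (x - y)\<^sup>2 * g n x)) \<longlonglongrightarrow> 0"
      unfolding g_def by (rule second_moment_tendsto_0_of_ratio_tendsto_0) fact+
    show "isCont f y" using f_cont by (simp add: continuous_on_eq_continuous_at)
  qed
  then show ?thesis by (simp add: g_def times_divide_eq_right)
qed

end

section \<open>Wronskians of two-sided Jacobi equations\<close>

definition jacobi_eq_at :: "(int \<Rightarrow> real) \<Rightarrow> (int \<Rightarrow> real) \<Rightarrow> real \<Rightarrow> (int \<Rightarrow> complex) \<Rightarrow> int \<Rightarrow> bool" where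
  "jacobi_eq_at ar br x v n \<longleftrightarrow>
     of_real (ar n) * v (n + 1) + of_real (br n) * v n + of_real (ar (n - 1)) * v (n - 1) = of_real x * v n"

definition wronskian :: "(int \<Rightarrow> real) \<Rightarrow> (int \<Rightarrow> complex) \<Rightarrow> (int \<Rightarrow> complex) \<Rightarrow> int \<Rightarrow> complex" where
  "wronskian ar v u n = of_real (ar n) * (v (n + 1) * u n - u (n + 1) * v n)"

lemma wronskian_pred_eq:
  assumes "jacobi_eq_at ar br x v n" "jacobi_eq_at ar br x u n"
  shows "wronskian ar v u (n - 1) = wronskian ar v u n"
  using assms unfolding jacobi_eq_at_def wronskian_def by simp algebra

lemma wronskian_left_constant:
  assumes "\<And>n. n \<le> 0 \<Longrightarrow> jacobi_eq_at ar br x v n" "\<And>n. n \<le> 0 \<Longrightarrow> jacobi_eq_at ar br x u n"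
  shows "wronskian ar v u (- int i) = wronskian ar v u 0"
proof (induction i)
  case (Suc i)
  have "wronskian ar v u (- int (Suc i)) = wronskian ar v u (- int i - 1)"
    by (rule arg_cong[where f = "wronskian ar v u"]) simp
  also have "\<dots> = wronskian ar v u (- int i)"
    by (rule wronskian_pred_eq[where br = br and x = x]) (simp_all add: assms)
  finally show ?case using Suc by simp
qed simp

lemma wronskian_eq_0_of_tendsto_0:
  assumes v_eq: "\<And>n. n \<le> 0 \<Longrightarrow> jacobi_eq_at ar br x v n"
    and u_eq: "\<And>n. n \<le> 0 \<Longrightarrow> jacobi_eq_at ar br x u n"
    and "bounded (range ar)" "bounded (range u)"
    and v_tendsto: "(\<lambda>i. v (- int i)) \<longlonglongrightarrow> 0"
  shows "wronskian ar v u 0 = 0"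
proof -
  obtain C where C: "\<And>n. \<bar>ar n\<bar> \<le> C" using \<open>bounded (range ar)\<close> by (auto simp: bounded_iff)
  obtain M where M: "\<And>n. norm (u n) \<le> M" using \<open>bounded (range u)\<close> by (auto simp: bounded_iff)
  have "(\<lambda>i. wronskian ar v u (- int (Suc i))) \<longlonglongrightarrow> 0"
  proof (rule Lim_null_comparison)
    show "\<forall>\<^sub>F i in sequentially. norm (wronskian ar v u (- int (Suc i)))
        \<le> C * (norm (v (- int i)) * M + M * norm (v (- int (Suc i))))"
    proof (intro always_eventually allI)
      fix i
      have "norm (wronskian ar v u (- int (Suc i)))
          = \<bar>ar (- int (Suc i))\<bar> * norm (v (- int i) * u (- int (Suc i)) - u (- int i) * v (- int (Suc i)))"
        by (simp add: wronskian_def norm_mult)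
      also have "\<dots> \<le> C * (norm (v (- int i)) * M + M * norm (v (- int (Suc i))))"
        using C M order_trans[OF abs_ge_zero C] order_trans[OF norm_ge_zero M]
        by (intro mult_mono order_trans[OF norm_triangle_ineq4] add_mono)
           (auto simp: norm_mult intro: mult_mono)
      finally show "norm (wronskian ar v u (- int (Suc i)))
          \<le> C * (norm (v (- int i)) * M + M * norm (v (- int (Suc i))))" .
    qed
    have "(\<lambda>i. norm (v (- int (Suc i)))) \<longlonglongrightarrow> 0"
      using LIMSEQ_Suc[OF tendsto_norm_zero[OF v_tendsto]] .
    then show "(\<lambda>i. C * (norm (v (- int i)) * M + M * norm (v (- int (Suc i))))) \<longlonglongrightarrow> 0"
      using tendsto_norm_zero[OF v_tendsto]
      by (intro tendsto_mult_right_zero tendsto_add_zero tendsto_mult_left_zero)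
  qed
  moreover have "(\<lambda>i. wronskian ar v u (- int (Suc i))) \<longlonglongrightarrow> wronskian ar v u 0"
    using wronskian_left_constant[OF v_eq u_eq] by (simp only: tendsto_const)
  ultimately show ?thesis using LIMSEQ_unique by metis
qed

lemma wronskian_of_real_eq_0_imp_zero:
  assumes "wronskian ar (\<lambda>n. of_real (w n)) u 0 = 0"
    and "wronskian ar u (\<lambda>n. cnj (u n)) 0 \<noteq> 0"
  shows "w 1 = 0"
proof -
  have "ar 0 \<noteq> 0" and u_nonreal: "u 1 * cnj (u 0) - cnj (u 1) * u 0 \<noteq> 0"
    using assms(2) by (auto simp: wronskian_def)
  then have proportional: "of_real (w 1) * u 0 = u 1 * of_real (w 0)"
    using assms(1) by (simp add: wronskian_def)
  have "cnj (of_real (w 1) * u 0) = cnj (u 1 * of_real (w 0))"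
    using proportional by simp
  then have prop_cnj: "of_real (w 1) * cnj (u 0) = cnj (u 1) * of_real (w 0)"
    by (simp only: complex_cnj_mult complex_cnj_complex_of_real)
  have "of_real (w 1) * (u 1 * cnj (u 0) - cnj (u 1) * u 0)
      = u 1 * (of_real (w 1) * cnj (u 0)) - cnj (u 1) * (of_real (w 1) * u 0)"
    by (simp add: algebra_simps)
  also have "\<dots> = 0"
    unfolding proportional prop_cnj by (simp add: algebra_simps)
  finally show ?thesis using u_nonreal by simp
qed

section \<open>Limits of normalized polynomial windows\<close>

text \<open>Entry j is p_{n+j-1}(x) / sqrt K_n(x,x), so the recurrence at entry j involves
  a_{n+j}, b_{n+j}, matching a right limit taken along n, and entry 1 carries the Nevai ratio.\<close>

definition CD_window :: "(nat \<Rightarrow> real) \<Rightarrow> (nat \<Rightarrow> real) \<Rightarrow> nat \<Rightarrow> real \<Rightarrow> int \<Rightarrow> real" where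
  "CD_window a b n x j =
     (if j \<le> 1 \<and> 0 \<le> int n + j - 1
      then orth_poly a b (nat (int n + j - 1)) x / sqrt (CD_kernel a b n x x) else 0)"

lemma CD_window_sq_le_1: "(CD_window a b n x j)\<^sup>2 \<le> 1"
proof (cases "j \<le> 1 \<and> 0 \<le> int n + j - 1")
  case True
  then have "(orth_poly a b (nat (int n + j - 1)) x)\<^sup>2 \<le> CD_kernel a b n x x"
    by (intro orth_poly_sq_le_CD_kernel) linarith
  then show ?thesis
    using True CD_kernel_diag_ge_1[of a b n x] by (simp add: CD_window_def power_divide)
qed (auto simp: CD_window_def)

lemma abs_CD_window_le_1: "\<bar>CD_window a b n x j\<bar> \<le> 1"
  using CD_window_sq_le_1 by (simp add: abs_square_le_1)

lemma CD_window_1_sq: "(CD_window a b n x 1)\<^sup>2 = (orth_poly a b n x)\<^sup>2 / CD_kernel a b n x x"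
  using CD_kernel_diag_ge_1[of a b n x] by (simp add: CD_window_def power_divide)

lemma sum_sq_CD_window_le_1: "(\<Sum>i<N. (CD_window a b n x (- int i))\<^sup>2) \<le> 1"
proof -
  define P where "P k = (orth_poly a b k x)\<^sup>2 / CD_kernel a b n x x" for k
  have \<kappa>_ge_1: "1 \<le> CD_kernel a b n x x" by (rule CD_kernel_diag_ge_1)
  have window_sq: "(CD_window a b n x (- int i))\<^sup>2 = (if i < n then P (n - 1 - i) else 0)" for i
    using \<kappa>_ge_1 by (auto simp: CD_window_def P_def power_divide nat_diff_distrib)
  have "(\<Sum>i<N. (CD_window a b n x (- int i))\<^sup>2) = (\<Sum>i\<in>{i. i < N \<and> i < n}. P (n - 1 - i))"
    unfolding window_sq by (rule sum.mono_neutral_cong_right) auto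
  also have "\<dots> = (\<Sum>k\<in>(\<lambda>i. n - 1 - i) ` {i. i < N \<and> i < n}. P k)"
    by (subst sum.reindex) (auto simp: inj_on_def)
  also have "\<dots> \<le> (\<Sum>k\<le>n. P k)"
    by (rule sum_mono2) (use \<kappa>_ge_1 in \<open>auto simp: P_def\<close>)
  also have "\<dots> = 1"
    using \<kappa>_ge_1 by (simp add: P_def CD_kernel_def power2_eq_square flip: sum_divide_distrib)
  finally show ?thesis .
qed

lemma CD_window_recurrence:
  assumes "j \<le> 0" "2 \<le> int n + j" "a (nat (int n + j)) \<noteq> 0"
  shows "a (nat (int n + j)) * CD_window a b n x (j + 1) + b (nat (int n + j)) * CD_window a b n x j
           + a (nat (int n + (j - 1))) * CD_window a b n x (j - 1) = x * CD_window a b n x j"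
proof -
  obtain k where k: "int n + j = int k + 2"
    using assms(2) by (metis add.commute le_iff_add zle_iff_zadd)
  have "a (k + 2) * orth_poly a b (k + 2) x + b (k + 2) * orth_poly a b (k + 1) x
          + a (k + 1) * orth_poly a b k x = x * orth_poly a b (k + 1) x"
    using assms(3) k by (intro orth_poly_recurrence) (simp add: nat_add_distrib)
  then have "(a (k + 2) * orth_poly a b (k + 2) x + b (k + 2) * orth_poly a b (k + 1) x
          + a (k + 1) * orth_poly a b k x) / sqrt (CD_kernel a b n x x)
        = x * orth_poly a b (k + 1) x / sqrt (CD_kernel a b n x x)"
    by simp
  moreover have "nat (int n + j) = k + 2" "nat (int n + (j - 1)) = k + 1"
    using k by auto
  ultimately show ?thesis
    using assms(1) k by (simp add: CD_window_def add_divide_distrib nat_add_distrib del: orth_poly.simps)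
qed

lemma right_limit_subseq:
  fixes y :: "nat \<Rightarrow> 'a::first_countable_topology"
  assumes "bounded (range a)" "bounded (range b)" "filterlim m at_top sequentially"
    and "compact S" "\<And>k. y k \<in> S"
  obtains r ar br y0 where "strict_mono r" "y0 \<in> S" "(y \<circ> r) \<longlonglongrightarrow> y0"
    "is_right_limit a b ar br" "bounded (range ar)"
    "\<And>j. (\<lambda>k. a (nat (int (m (r k)) + j))) \<longlonglongrightarrow> ar j"
    "\<And>j. (\<lambda>k. b (nat (int (m (r k)) + j))) \<longlonglongrightarrow> br j"
proof -
  obtain C where C: "\<And>n. \<bar>a n\<bar> \<le> C" "\<And>n. \<bar>b n\<bar> \<le> C"
    using assms(1,2) unfolding bounded_iff by (metis real_norm_def rangeI max.cobounded1 max.cobounded2 order_trans)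
  define shift where "shift c k = (\<lambda>j::int. c (nat (int (m k) + j)))" for c :: "nat \<Rightarrow> real" and k
  define T where "T k = (shift a k, shift b k, y k)" for k
  define box where "box = (UNIV \<rightarrow>\<^sub>E {-C..C} :: (int \<Rightarrow> real) set)"
  have "compact (box \<times> box \<times> S)"
    unfolding box_def by (intro compact_Times compact_PiE_UNIV compact_Icc assms(4))
  moreover have "T k \<in> box \<times> box \<times> S" for k
    using C assms(5) by (auto simp: T_def shift_def box_def abs_le_iff minus_le_iff)
  ultimately obtain l r where l: "l \<in> box \<times> box \<times> S" and r: "strict_mono r" "(T \<circ> r) \<longlonglongrightarrow> l"
    using compact_imp_seq_compact unfolding seq_compact_def by metis
  obtain ar br y0 where l_eq: "l = (ar, br, y0)" by (metis prod_cases3)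
  have ar_lim: "(\<lambda>k. shift a (r k)) \<longlonglongrightarrow> ar" and br_lim: "(\<lambda>k. shift b (r k)) \<longlonglongrightarrow> br"
    and y_lim: "(y \<circ> r) \<longlonglongrightarrow> y0"
    using tendsto_fst[OF r(2)] tendsto_fst[OF tendsto_snd[OF r(2)]] tendsto_snd[OF tendsto_snd[OF r(2)]]
    by (simp_all add: l_eq T_def o_def)
  have ar_lim': "(\<lambda>k. a (nat (int (m (r k)) + j))) \<longlonglongrightarrow> ar j"
    and br_lim': "(\<lambda>k. b (nat (int (m (r k)) + j))) \<longlonglongrightarrow> br j" for j
    using continuous_on_tendsto_compose[OF continuous_on_product_coordinates[of j] ar_lim]
      continuous_on_tendsto_compose[OF continuous_on_product_coordinates[of j] br_lim]
    by (simp_all add: shift_def)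
  have "is_right_limit a b ar br"
    unfolding is_right_limit_def
    using filterlim_compose[OF assms(3) filterlim_subseq[OF r(1)]] ar_lim' br_lim'
    by (intro exI[of _ "m \<circ> r"]) (simp add: o_def)
  moreover have "bounded (range ar)"
    using l by (auto simp: l_eq box_def bounded_iff abs_le_iff PiE_iff minus_le_iff intro!: exI[of _ C])
  moreover have "y0 \<in> S"
    using l by (simp add: l_eq)
  ultimately show thesis
    using that r(1) y_lim ar_lim' br_lim' by blast
qed

lemma CD_window_limit:
  assumes a_nonzero: "\<forall>n\<ge>1. a n \<noteq> 0"
    and "bounded (range a)" "bounded (range b)" "compact K"
    and nn: "filterlim nn at_top sequentially" and xx: "\<And>k. xx k \<in> K"
  obtains r ar br w x0 where "strict_mono r" "is_right_limit a b ar br" "bounded (range ar)" "x0 \<in> K"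
    "\<And>j. (\<lambda>k. CD_window a b (nn (r k)) (xx (r k)) j) \<longlonglongrightarrow> w j"
    "\<And>j. j \<le> 0 \<Longrightarrow> jacobi_eq_at ar br x0 (\<lambda>n. of_real (w n)) j"
    "(\<lambda>i. w (- int i)) \<longlonglongrightarrow> 0"
proof -
  define W where "W k = CD_window a b (nn k) (xx k)" for k
  have compact: "compact ((UNIV \<rightarrow>\<^sub>E {-1..1::real}) \<times> K)"
    by (intro compact_Times compact_PiE_UNIV compact_Icc \<open>compact K\<close>)
  have mem: "(W k, xx k) \<in> (UNIV \<rightarrow>\<^sub>E {-1..1}) \<times> K" for k
    using abs_CD_window_le_1 xx by (auto simp: W_def abs_le_iff minus_le_iff)
  obtain r y0 ar br where r: "strict_mono r" and y0: "y0 \<in> (UNIV \<rightarrow>\<^sub>E {-1..1::real}) \<times> K"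
    and y_lim: "((\<lambda>k. (W k, xx k)) \<circ> r) \<longlonglongrightarrow> y0"
    and right_limit: "is_right_limit a b ar br" "bounded (range ar)"
    and a_lim: "\<And>j. (\<lambda>k. a (nat (int (nn (r k)) + j))) \<longlonglongrightarrow> ar j"
    and b_lim: "\<And>j. (\<lambda>k. b (nat (int (nn (r k)) + j))) \<longlonglongrightarrow> br j"
    by (rule right_limit_subseq[where y = "\<lambda>k. (W k, xx k)", OF \<open>bounded (range a)\<close> \<open>bounded (range b)\<close> nn compact mem]) blast
  obtain w x0 where y0_eq: "y0 = (w, x0)" by fastforce
  have W_lim: "(\<lambda>k. W (r k) j) \<longlonglongrightarrow> w j" for j
    using continuous_on_tendsto_compose[OF continuous_on_product_coordinates[of j] tendsto_fst[OF y_lim]]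
    by (simp add: y0_eq o_def)
  have x_lim: "(\<lambda>k. xx (r k)) \<longlonglongrightarrow> x0"
    using tendsto_snd[OF y_lim] by (simp add: y0_eq o_def)
  have nn_r: "filterlim (\<lambda>k. nn (r k)) at_top sequentially"
    using filterlim_compose[OF nn filterlim_subseq[OF r]] .
  have w_eq: "ar j * w (j + 1) + br j * w j + ar (j - 1) * w (j - 1) = x0 * w j" if "j \<le> 0" for j
  proof (rule LIMSEQ_unique)
    let ?lhs = "\<lambda>k. a (nat (int (nn (r k)) + j)) * W (r k) (j + 1) + b (nat (int (nn (r k)) + j)) * W (r k) j
                   + a (nat (int (nn (r k)) + (j - 1))) * W (r k) (j - 1)"
    show "?lhs \<longlonglongrightarrow> ar j * w (j + 1) + br j * w j + ar (j - 1) * w (j - 1)"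
      by (intro tendsto_intros a_lim b_lim W_lim)
    have "\<forall>\<^sub>F k in sequentially. nat (2 - j) \<le> nn (r k)"
      using nn_r by (simp add: filterlim_at_top)
    then have "\<forall>\<^sub>F k in sequentially. xx (r k) * W (r k) j = ?lhs k"
    proof eventually_elim
      case (elim k)
      then have "2 \<le> int (nn (r k)) + j" by linarith
      moreover from this have "a (nat (int (nn (r k)) + j)) \<noteq> 0" using a_nonzero by simp
      ultimately show ?case
        unfolding W_def using CD_window_recurrence[OF \<open>j \<le> 0\<close>] by simp
    qed
    then show "?lhs \<longlonglongrightarrow> x0 * w j"
      by (rule Lim_transform_eventually[rotated]) (intro tendsto_intros x_lim W_lim)
  qed
  have "(\<Sum>i<N. (w (- int i))\<^sup>2) \<le> 1" for N
  proof (rule LIMSEQ_le_const2)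
    show "(\<lambda>k. \<Sum>i<N. (W (r k) (- int i))\<^sup>2) \<longlonglongrightarrow> (\<Sum>i<N. (w (- int i))\<^sup>2)"
      by (intro tendsto_intros W_lim)
  qed (auto simp: W_def sum_sq_CD_window_le_1)
  then have "(\<lambda>i. w (- int i)) \<longlonglongrightarrow> 0"
    by (rule tendsto_0_of_sum_sq_bounded)
  moreover have "jacobi_eq_at ar br x0 (\<lambda>n. of_real (w n)) j" if "j \<le> 0" for j
    using arg_cong[OF w_eq[OF that], of complex_of_real] by (simp add: jacobi_eq_at_def)
  moreover have "x0 \<in> K"
    using y0 by (simp add: y0_eq)
  ultimately show thesis
    using that r right_limit W_lim unfolding W_def by blast
qed

lemma ratio_uniformly_tendsto_0:
  fixes u :: "(int \<Rightarrow> real) \<Rightarrow> (int \<Rightarrow> real) \<Rightarrow> real \<Rightarrow> int \<Rightarrow> complex"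
  assumes a_nonzero: "\<forall>n\<ge>1. a n \<noteq> 0"
    and a_bounded: "bounded (range a)" and b_bounded: "bounded (range b)" and "compact K"
    and u_eq: "\<And>ar br x0 n. is_right_limit a b ar br \<Longrightarrow> x0 \<in> K \<Longrightarrow> jacobi_eq_at ar br x0 (u ar br x0) n"
    and u_bounded: "\<And>ar br x0. is_right_limit a b ar br \<Longrightarrow> x0 \<in> K \<Longrightarrow> bounded (range (u ar br x0))"
    and u_wronskian: "\<And>ar br x0. is_right_limit a b ar br \<Longrightarrow> x0 \<in> K \<Longrightarrow>
          wronskian ar (u ar br x0) (\<lambda>n. cnj (u ar br x0 n)) 0 \<noteq> 0"
  shows "uniform_limit K (\<lambda>n x. (orth_poly a b n x)\<^sup>2 / CD_kernel a b n x x) (\<lambda>x. 0) sequentially"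
proof (rule ccontr)
  define ratio where "ratio n x = (orth_poly a b n x)\<^sup>2 / CD_kernel a b n x x" for n x
  assume "\<not> uniform_limit K (\<lambda>n x. (orth_poly a b n x)\<^sup>2 / CD_kernel a b n x x) (\<lambda>x. 0) sequentially"
  then obtain e where "0 < e" "\<not> (\<forall>\<^sub>F n in sequentially. \<forall>x\<in>K. \<bar>ratio n x\<bar> < e)"
    unfolding uniform_limit_iff ratio_def dist_real_def by auto
  moreover have "0 \<le> ratio n x" for n x
    using CD_kernel_diag_ge_1[of a b n x] by (simp add: ratio_def)
  ultimately have "\<forall>N. \<exists>n\<ge>N. \<exists>x\<in>K. e \<le> ratio n x"
    by (auto simp: eventually_sequentially not_less)
  then obtain nn xx where nn: "\<And>N. N \<le> nn N" and xx: "\<And>N. xx N \<in> K" and large: "\<And>N. e \<le> ratio (nn N) (xx N)"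
    by metis
  have nn_tendsto: "filterlim nn at_top sequentially"
    using nn by (intro filterlim_at_top_mono[OF filterlim_ident]) auto
  obtain r ar br w x0 where r: "strict_mono r" and right_limit: "is_right_limit a b ar br"
    and "bounded (range ar)" and "x0 \<in> K"
    and w_lim: "\<And>j. (\<lambda>k. CD_window a b (nn (r k)) (xx (r k)) j) \<longlonglongrightarrow> w j"
    and w_eq: "\<And>j. j \<le> 0 \<Longrightarrow> jacobi_eq_at ar br x0 (\<lambda>n. of_real (w n)) j"
    and w_tendsto: "(\<lambda>i. w (- int i)) \<longlonglongrightarrow> 0"
    by (rule CD_window_limit[where xx = xx, OF a_nonzero a_bounded b_bounded \<open>compact K\<close> nn_tendsto xx]) blast
  have "e \<le> (w 1)\<^sup>2"
  proof (rule LIMSEQ_le_const)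
    show "(\<lambda>k. (CD_window a b (nn (r k)) (xx (r k)) 1)\<^sup>2) \<longlonglongrightarrow> (w 1)\<^sup>2"
      by (intro tendsto_intros w_lim)
  qed (use large in \<open>auto simp: CD_window_1_sq ratio_def\<close>)
  moreover have "wronskian ar (\<lambda>n. of_real (w n)) (u ar br x0) 0 = 0"
  proof (rule wronskian_eq_0_of_tendsto_0)
    show "(\<lambda>i. complex_of_real (w (- int i))) \<longlonglongrightarrow> 0"
      using tendsto_of_real[OF w_tendsto] by simp
  qed (use w_eq u_eq u_bounded right_limit \<open>x0 \<in> K\<close> \<open>bounded (range ar)\<close> in auto)
  then have "w 1 = 0"
    using wronskian_of_real_eq_0_imp_zero u_wronskian[OF right_limit \<open>x0 \<in> K\<close>] by blast
  ultimately show False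
    using \<open>0 < e\<close> by simp
qed

theorem proposition7p2:
  fixes a b :: "nat \<Rightarrow> real" and K :: "real set"
    and u :: "(int \<Rightarrow> real) \<Rightarrow> (int \<Rightarrow> real) \<Rightarrow> real \<Rightarrow> int \<Rightarrow> complex"
  assumes a_pos: "\<forall>n\<ge>1. a n > 0"
    and a_inf: "\<exists>c>0. \<forall>n\<ge>1. c \<le> a n"
    and a_sup: "\<exists>C. \<forall>n\<ge>1. a n \<le> C"
    and b_bdd: "\<exists>B. \<forall>n\<ge>1. \<bar>b n\<bar> \<le> B"
    and K_compact: "compact K"
    and u_sol: "\<forall>ar br x0 n. is_right_limit a b ar br \<and> x0 \<in> K \<longrightarrow>
        complex_of_real (ar n) * u ar br x0 (n + 1) + complex_of_real (br n) * u ar br x0 n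
          + complex_of_real (ar (n - 1)) * u ar br x0 (n - 1)
        = complex_of_real x0 * u ar br x0 n"
    and u_bdd: "\<exists>M. \<forall>ar br x0 n. is_right_limit a b ar br \<and> x0 \<in> K \<longrightarrow>
        cmod (u ar br x0 n) \<le> M"
    and u_wronsk: "\<exists>\<delta>>0. \<forall>ar br x0. is_right_limit a b ar br \<and> x0 \<in> K \<longrightarrow>
        \<delta> \<le> ar 0 * cmod (u ar br x0 1 * cnj (u ar br x0 0) - cnj (u ar br x0 1) * u ar br x0 0)"
  shows "uniform_limit K
           (\<lambda>n x0. (orth_poly a b n x0)\<^sup>2 / CD_kernel a b n x0 x0) (\<lambda>x0. 0) sequentially
         \<and> (\<forall>\<rho> x0 f. jacobi_spectral_measure a b \<rho> \<and> x0 \<in> K \<and>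
              continuous_on UNIV f \<and> bounded (range (f :: real \<Rightarrow> real)) \<longrightarrow>
              (\<lambda>n. integral\<^sup>L \<rho> (\<lambda>x. f x * (CD_kernel a b n x x0)\<^sup>2 / CD_kernel a b n x0 x0))
                \<longlonglongrightarrow> f x0)"
proof -
  have a_nonzero: "\<forall>n\<ge>1. a n \<noteq> 0"
    using a_pos by force
  obtain C where "\<forall>n\<ge>1. a n \<le> C"
    using a_sup by blast
  then have a_bounded: "bounded (range a)"
    using a_pos by (intro bounded_range_of_bounded_from_1) force
  have b_bounded: "bounded (range b)"
    using b_bdd bounded_range_of_bounded_from_1 by blast
  have ratio: "uniform_limit K (\<lambda>n x0. (orth_poly a b n x0)\<^sup>2 / CD_kernel a b n x0 x0) (\<lambda>x0. 0) sequentially"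
  proof (rule ratio_uniformly_tendsto_0[OF a_nonzero a_bounded b_bounded K_compact])
    show "jacobi_eq_at ar br x0 (u ar br x0) n" if "is_right_limit a b ar br" "x0 \<in> K" for ar br x0 n
      using u_sol that unfolding jacobi_eq_at_def by blast
    show "bounded (range (u ar br x0))" if "is_right_limit a b ar br" "x0 \<in> K" for ar br x0
      using u_bdd that unfolding bounded_iff by blast
    show "wronskian ar (u ar br x0) (\<lambda>n. cnj (u ar br x0 n)) 0 \<noteq> 0"
      if "is_right_limit a b ar br" "x0 \<in> K" for ar br x0
      using u_wronsk that by (force simp: wronskian_def)
  qed
  moreover have "(\<lambda>n. integral\<^sup>L \<rho> (\<lambda>x. f x * (CD_kernel a b n x x0)\<^sup>2 / CD_kernel a b n x0 x0)) \<longlonglongrightarrow> f x0"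
    if "jacobi_spectral_measure a b \<rho>" "x0 \<in> K" "continuous_on UNIV f" "bounded (range f)" for \<rho> x0 f
  proof -
    interpret jacobi_spectral a b \<rho>
      using a_nonzero that(1) by unfold_locales
    show ?thesis
      using nevai_of_ratio_tendsto_0[OF a_bounded tendsto_uniform_limitI[OF ratio that(2)] that(3,4)] .
  qed
  ultimately show ?thesis by blast
qed

end
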